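(* Let $\Omega$ be a topological space and $\mathcal{F}$ a convex cone of continuous real-valued functions on $\Omega$ containing all real constants and satisfying the maximum principle; let $\mathcal{G}$ be the complete lattice cone generated by $\mathcal{F}$. Let $K_1,K_2,\dots$ be non-empty compact $\mathcal{F}$-convex subsets of $\Omega$ with $K_i\subsetneq\operatorname{int}K_{i+1}$ for all $i$ and $\bigcup_{i=1}^\infty K_i=\Omega$. Then there exists a continuous, proper, non-negative function $p\in\mathcal{G}$ such that for every compact $L\subset\Omega$ there are finitely many $f_1,\dots,f_m\in\mathcal{F}$ with $p=\max\{f_1,\dots,f_m\}$ on $L$.
   Context: A compact set $K$ is $\mathcal{F}$-convex if $K=\{\omega\in\Omega\mid f(\omega)\leq\sup f(K)\text{ for all }f\in\mathcal{F}\}$. $\mathcal{F}$ satisfies the maximum principle if for every non-constant $f\in\mathcal{F}$, non-empty compact $K$ and open $U\supset K$, $\sup f(K)<\sup f(U)$. The complete lattice cone generated by $\mathcal{F}$ is the smallest set of functions $\Omega\to(-\infty,\infty]$ containing $\mathcal{F}$, closed under nonnegative linear combinations and pointwise suprema of arbitrary families. Proper: preimages of compact sets are compact. *)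

theory Defs
  imports "HOL-Analysis.Analysis"
begin

text \<open>Omega is the whole type 'a (a topological space); functions in F are real-valued.\<close>

definition F_convex :: "('a \<Rightarrow> real) set \<Rightarrow> 'a set \<Rightarrow> bool" where
  "F_convex F K \<longleftrightarrow> K = {w. \<forall>f\<in>F. f w \<le> Sup (f ` K)}"

definition max_principle :: "('a::topological_space \<Rightarrow> real) set \<Rightarrow> bool" where
  "max_principle F \<longleftrightarrow>
     (\<forall>f\<in>F. (\<not> (\<exists>c. \<forall>x. f x = c)) \<longrightarrow>
       (\<forall>K U. K \<noteq> {} \<and> compact K \<and> open U \<and> K \<subseteq> U \<longrightarrow>
          (SUP x\<in>K. ereal (f x)) < (SUP x\<in>U. ereal (f x))))"

definition convex_cone_fun :: "('a \<Rightarrow> real) set \<Rightarrow> bool" where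
  "convex_cone_fun F \<longleftrightarrow>
     (\<forall>f\<in>F. \<forall>g\<in>F. (\<lambda>x. f x + g x) \<in> F) \<and>
     (\<forall>f\<in>F. \<forall>c::real. c \<ge> 0 \<longrightarrow> (\<lambda>x. c * f x) \<in> F)"

text \<open>Complete lattice cone generated by F: functions into (-\<infinity>,\<infinity>], modelled as ereal-valued;
  smallest set containing F closed under nonnegative linear combinations and pointwise
  suprema of (nonempty) families.\<close>

inductive_set lattice_cone :: "('a \<Rightarrow> real) set \<Rightarrow> ('a \<Rightarrow> ereal) set" for F where
  base: "f \<in> F \<Longrightarrow> (\<lambda>x. ereal (f x)) \<in> lattice_cone F"
| add: "g \<in> lattice_cone F \<Longrightarrow> h \<in> lattice_cone F \<Longrightarrow> (\<lambda>x. g x + h x) \<in> lattice_cone F"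
| smult: "(c::real) \<ge> 0 \<Longrightarrow> g \<in> lattice_cone F \<Longrightarrow> (\<lambda>x. ereal c * g x) \<in> lattice_cone F"
| sup: "S \<noteq> {} \<Longrightarrow> \<forall>g\<in>S. g \<in> lattice_cone F \<Longrightarrow> (\<lambda>x. SUP g\<in>S. g x) \<in> lattice_cone F"

definition proper_map :: "('a::topological_space \<Rightarrow> 'b::topological_space) \<Rightarrow> bool" where
  "proper_map p \<longleftrightarrow> (\<forall>C. compact C \<longrightarrow> compact (p -` C))"

end

theory Submission
  imports Defs
begin

text \<open>Each compact shell \<open>K (j+2) - interior (K (j+1))\<close> misses the \<open>F\<close>-convex set
  \<open>K j\<close>, so finitely many functions of \<open>F\<close> are negative on \<open>K j\<close> while one of them exceeds \<open>j\<close>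
  at every point of the shell. The supremum \<open>p\<close> of all these functions and \<open>0\<close> is locally a
  finite maximum, because on \<open>K n\<close> the functions chosen for \<open>j \<ge> n\<close> are negative; hence \<open>p\<close> is
  continuous, and it is proper because \<open>p > j\<close> outside \<open>K (j+1)\<close>.\<close>

lemma continuous_on_Max_image:
  fixes fs :: "('a::topological_space \<Rightarrow> real) set"
  assumes "finite fs" "fs \<noteq> {}" "\<And>f. f \<in> fs \<Longrightarrow> continuous_on S f"
  shows "continuous_on S (\<lambda>x. Max ((\<lambda>f. f x) ` fs))"
  using assms
proof (induction fs rule: finite_ne_induct)
  case (insert f fs)
  have "(\<lambda>x. Max ((\<lambda>f. f x) ` insert f fs)) = (\<lambda>x. max (f x) (Max ((\<lambda>f. f x) ` fs)))"
    using insert by (auto intro!: Max_insert)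
  then show ?case
    using insert by (auto intro!: continuous_on_max)
qed simp

lemma proper_map_if_sublevels_compact:
  fixes p :: "'a::topological_space \<Rightarrow> real"
  assumes "continuous_on UNIV p" "\<And>r. \<exists>C. compact C \<and> {x. p x \<le> r} \<subseteq> C"
  shows "proper_map p"
  unfolding proper_map_def
proof (intro allI impI)
  fix D :: "real set"
  assume "compact D"
  then obtain r where "\<forall>y\<in>D. y \<le> r"
    using compact_imp_bounded bounded_real by (meson abs_le_D1)
  then have "p -` D \<subseteq> {x. p x \<le> r}"
    by auto
  moreover obtain C where "compact C" "{x. p x \<le> r} \<subseteq> C"
    using assms(2) by blast
  moreover have "closed (p -` D)"
    using \<open>compact D\<close> assms(1) by (intro closed_vimage compact_imp_closed)
  ultimately have "p -` D = C \<inter> p -` D" "compact (C \<inter> p -` D)"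
    by auto
  then show "compact (p -` D)"
    by simp
qed

lemma lattice_cone_SUP:
  assumes "T \<subseteq> F" "T \<noteq> {}" "\<And>x. bdd_above ((\<lambda>f. f x) ` T)"
  shows "(\<lambda>x. ereal (SUP f\<in>T. f x)) \<in> lattice_cone F"
proof -
  have "(\<lambda>x. SUP g\<in>(\<lambda>f x. ereal (f x)) ` T. g x) \<in> lattice_cone F"
    using assms(1,2) by (intro lattice_cone.sup) (auto intro: lattice_cone.base)
  moreover have "ereal (SUP f\<in>T. f x) = (SUP f\<in>T. ereal (f x))" for x
    using assms(2,3)
    by (subst continuous_at_Sup_mono)
       (auto simp: mono_def continuous_at_imp_continuous_at_within continuous_at_ereal image_comp)
  ultimately show ?thesis
    by (simp add: image_comp o_def)
qed

lemma convex_cone_fun_affine: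
  assumes "convex_cone_fun F" "\<And>c. (\<lambda>x. c) \<in> F" "f \<in> F" "c \<ge> 0"
  shows "(\<lambda>x. c * f x + e) \<in> F"
proof -
  have "(\<lambda>x. c * f x) \<in> F"
    using assms(1,3,4) unfolding convex_cone_fun_def by blast
  moreover have "\<And>g h. g \<in> F \<Longrightarrow> h \<in> F \<Longrightarrow> (\<lambda>x. g x + h x) \<in> F"
    using assms(1) unfolding convex_cone_fun_def by blast
  ultimately show ?thesis
    using assms(2) by blast
qed

text \<open>As \<open>y \<notin> K\<close> and \<open>K\<close> is \<open>F\<close>-convex, some \<open>f \<in> F\<close> has \<open>sup f(K) < f(y)\<close>; the required
  function is a positive multiple of \<open>f\<close> shifted to vanish halfway between these two values.\<close>

lemma F_convex_separating_function:
  fixes F :: "('a::topological_space \<Rightarrow> real) set"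
  assumes cont: "\<And>f. f \<in> F \<Longrightarrow> continuous_on UNIV f"
    and cone: "convex_cone_fun F" and const: "\<And>c. (\<lambda>x. c) \<in> F"
    and "compact K" "F_convex F K" "y \<notin> K"
  shows "\<exists>h\<in>F. (\<forall>x\<in>K. h x < 0) \<and> h y > r"
proof -
  have "y \<notin> {w. \<forall>f\<in>F. f w \<le> Sup (f ` K)}"
    using \<open>F_convex F K\<close> \<open>y \<notin> K\<close> unfolding F_convex_def by simp
  then obtain f where f: "f \<in> F" "f y > Sup (f ` K)"
    by (auto simp: not_le)
  define m where "m = (Sup (f ` K) + f y) / 2"
  define c where "c = (\<bar>r\<bar> + 1) / (f y - m)"
  have "f y > m" "c > 0"
    using f(2) unfolding m_def c_def by simp_all
  have "bdd_above (f ` K)"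
    using \<open>compact K\<close> cont[OF f(1)]
    by (meson bounded_imp_bdd_above compact_continuous_image compact_imp_bounded
        continuous_on_subset subset_UNIV)
  then have "f x < m" if "x \<in> K" for x
    using cSUP_upper[OF that, of f] f(2) unfolding m_def by simp
  then have "\<forall>x\<in>K. c * f x - c * m < 0"
    using \<open>c > 0\<close> by (simp add: algebra_simps)
  moreover have "c * f y - c * m = \<bar>r\<bar> + 1"
    using \<open>f y > m\<close> unfolding c_def right_diff_distrib[symmetric] by simp
  moreover have "(\<lambda>x. c * f x + - (c * m)) \<in> F"
    using \<open>c > 0\<close> by (intro convex_cone_fun_affine cone const f(1)) simp
  ultimately show ?thesis
    by (intro bexI[of _ "\<lambda>x. c * f x + - (c * m)"]) auto
qed

lemma F_convex_finite_separating_family: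
  fixes F :: "('a::topological_space \<Rightarrow> real) set"
  assumes cont: "\<And>f. f \<in> F \<Longrightarrow> continuous_on UNIV f"
    and cone: "convex_cone_fun F" and const: "\<And>c. (\<lambda>x. c) \<in> F"
    and "compact K" "F_convex F K" "compact A" "A \<inter> K = {}"
  shows "\<exists>H. finite H \<and> H \<subseteq> F \<and> (\<forall>h\<in>H. \<forall>x\<in>K. h x < 0) \<and> (\<forall>y\<in>A. \<exists>h\<in>H. h y > r)"
proof -
  have "\<forall>y\<in>A. \<exists>h\<in>F. (\<forall>x\<in>K. h x < 0) \<and> h y > r"
    using F_convex_separating_function[OF cont cone const \<open>compact K\<close> \<open>F_convex F K\<close>]
      \<open>A \<inter> K = {}\<close> by blast
  then obtain sep where sep: "\<And>y. y \<in> A \<Longrightarrow> sep y \<in> F \<and> (\<forall>x\<in>K. sep y x < 0) \<and> sep y y > r"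
    by metis
  have "open {x. r < sep y x}" if "y \<in> A" for y
    using sep[OF that] cont by (intro open_Collect_less) auto
  moreover have "A \<subseteq> (\<Union>y\<in>A. {x. r < sep y x})"
    using sep by auto
  ultimately obtain J where "J \<subseteq> A" "finite J" "A \<subseteq> (\<Union>y\<in>J. {x. r < sep y x})"
    using compactE_image[OF \<open>compact A\<close>] by metis
  then show ?thesis
    using sep by (intro exI[of _ "sep ` J"]) blast
qed

locale exhausting_sequence =
  fixes K :: "nat \<Rightarrow> 'a::topological_space set"
  assumes subset_interior_Suc: "K n \<subseteq> interior (K (Suc n))"
    and covers: "(\<Union>n. K n) = UNIV"
begin

lemma subset_mono: "m \<le> n \<Longrightarrow> K m \<subseteq> K n"
  by (rule lift_Suc_mono_le[of K]) (use subset_interior_Suc interior_subset in blast)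

lemma in_interior: "\<exists>n. x \<in> interior (K n)"
  using covers subset_interior_Suc by blast

lemma compact_subset: "compact L \<Longrightarrow> \<exists>N. L \<subseteq> K N"
proof -
  assume "compact L"
  moreover have "L \<subseteq> (\<Union>n. interior (K n))"
    using in_interior by blast
  ultimately obtain J where "finite J" "L \<subseteq> (\<Union>n\<in>J. interior (K n))"
    using compactE_image[of L UNIV "\<lambda>n. interior (K n)"] by auto
  moreover obtain N where "\<forall>n\<in>J. n \<le> N"
    using \<open>finite J\<close> finite_nat_set_iff_bounded_le by blast
  then have "interior (K n) \<subseteq> K N" if "n \<in> J" for n
    using subset_mono[of n N] interior_subset that by blast
  ultimately show ?thesis
    by blast
qed

definition shell :: "nat \<Rightarrow> 'a set" where
  "shell j = K (j + 2) - interior (K (j + 1))"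

lemma compact_shell: "(\<And>n. compact (K n)) \<Longrightarrow> compact (shell j)"
  unfolding shell_def Diff_eq by (intro compact_Int_closed) auto

lemma shell_disjoint: "shell j \<inter> K j = {}"
  unfolding shell_def using subset_interior_Suc[of j] by auto

lemma in_shell_if_not_in:
  assumes "x \<notin> K (Suc j)"
  shows "\<exists>m\<ge>j. x \<in> shell m"
proof -
  define n where "n = (LEAST n. x \<in> K n)"
  have "\<exists>n. x \<in> K n"
    using covers by blast
  then have "x \<in> K n"
    unfolding n_def by (rule LeastI_ex)
  have "\<not> n \<le> Suc j"
  proof
    assume "n \<le> Suc j"
    then show False
      using assms subset_mono[of n "Suc j"] \<open>x \<in> K n\<close> by blast
  qed
  then obtain m where m: "n = m + 2" "j \<le> m"
    by (intro that[of "n - 2"]) auto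
  then have "x \<notin> K (m + 1)"
    using not_less_Least[of "m + 1" "\<lambda>n. x \<in> K n"] unfolding n_def by simp
  then have "x \<in> shell m"
    using \<open>x \<in> K n\<close> m(1) interior_subset unfolding shell_def by auto
  then show ?thesis
    using m(2) by blast
qed

end

locale separating_exhaustion = exhausting_sequence K
  for K :: "nat \<Rightarrow> 'a::topological_space set" +
  fixes H :: "nat \<Rightarrow> ('a \<Rightarrow> real) set"
  assumes finite_H: "finite (H j)"
    and continuous_H: "h \<in> H j \<Longrightarrow> continuous_on UNIV h"
    and negative_H: "h \<in> H j \<Longrightarrow> x \<in> K j \<Longrightarrow> h x < 0"
    and large_H: "y \<in> shell j \<Longrightarrow> \<exists>h\<in>H j. h y > real j"
begin

definition family :: "nat \<Rightarrow> ('a \<Rightarrow> real) set" where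
  "family n = insert (\<lambda>_. 0) (\<Union>j<n. H j)"

definition envelope :: "'a \<Rightarrow> real" where
  "envelope x = (SUP f\<in>(\<Union>n. family n). f x)"

lemma finite_family: "finite (family n)"
  unfolding family_def using finite_H by simp

lemma family_nonempty: "family n \<noteq> {}"
  unfolding family_def by simp

lemma H_subset_family: "H j \<subseteq> family (Suc j)"
  unfolding family_def by blast

lemma le_Max_family:
  assumes "x \<in> K n" "f \<in> (\<Union>n. family n)"
  shows "f x \<le> Max ((\<lambda>f. f x) ` family n)"
proof (cases "f \<in> family n")
  case True
  then show ?thesis
    using finite_family by simp
next
  case False
  then obtain j where "f \<in> H j"
    using assms(2) unfolding family_def by blast
  moreover have "\<not> j < n"
    using \<open>f \<in> H j\<close> False unfolding family_def by blast
  ultimately have "f x < 0"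
    using negative_H assms(1) subset_mono[of n j] by auto
  also have "0 \<le> Max ((\<lambda>f. f x) ` family n)"
    using finite_family by (intro Max_ge_iff[THEN iffD2]) (auto simp: family_def)
  finally show ?thesis
    by simp
qed

lemma envelope_eq_Max:
  assumes "x \<in> K n"
  shows "envelope x = Max ((\<lambda>f. f x) ` family n)"
  unfolding envelope_def
proof (rule cSup_eq_maximum)
  show "Max ((\<lambda>f. f x) ` family n) \<in> (\<lambda>f. f x) ` (\<Union>n. family n)"
    using Max_in[of "(\<lambda>f. f x) ` family n"] finite_family family_nonempty by blast
qed (use le_Max_family[OF assms] in blast)

lemma bdd_above_family_values: "bdd_above ((\<lambda>f. f x) ` (\<Union>n. family n))"
proof -
  obtain n where "x \<in> K n"
    using covers by blast
  then show ?thesis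
    by (rule bdd_aboveI2[OF le_Max_family])
qed

lemma envelope_nonneg: "envelope x \<ge> 0"
proof -
  have "(\<lambda>_. 0) \<in> (\<Union>n. family n)"
    unfolding family_def by blast
  then show ?thesis
    unfolding envelope_def using cSUP_upper[OF _ bdd_above_family_values] by fastforce
qed

lemma continuous_family: "f \<in> family n \<Longrightarrow> continuous_on S f"
  unfolding family_def using continuous_on_subset[OF continuous_H subset_UNIV] by auto

lemma continuous_envelope: "continuous_on UNIV envelope"
proof -
  have "continuous_on (interior (K n)) envelope" for n
  proof (rule continuous_on_eq)
    show "continuous_on (interior (K n)) (\<lambda>x. Max ((\<lambda>f. f x) ` family n))"
      by (rule continuous_on_Max_image[OF finite_family family_nonempty continuous_family])
    show "Max ((\<lambda>f. f x) ` family n) = envelope x" if "x \<in> interior (K n)" for x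
      using envelope_eq_Max[of x n] interior_subset[of "K n"] that by auto
  qed
  then have "continuous_on (\<Union>n. interior (K n)) envelope"
    by (intro continuous_on_open_UN) auto
  moreover have "(\<Union>n. interior (K n)) = UNIV"
    using in_interior by blast
  ultimately show ?thesis
    by simp
qed

lemma envelope_gt: "x \<notin> K (Suc j) \<Longrightarrow> envelope x > real j"
proof -
  assume "x \<notin> K (Suc j)"
  then obtain m where "j \<le> m" "x \<in> shell m"
    using in_shell_if_not_in by blast
  then obtain h where "h \<in> H m" "h x > real m"
    using large_H by blast
  moreover have "h x \<le> envelope x"
    using \<open>h \<in> H m\<close> H_subset_family unfolding envelope_def
    by (intro cSUP_upper[OF _ bdd_above_family_values]) blast
  ultimately show ?thesis
    using \<open>j \<le> m\<close> by linarith
qed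

lemma proper_envelope:
  assumes "\<And>n. compact (K n)"
  shows "proper_map envelope"
proof (rule proper_map_if_sublevels_compact[OF continuous_envelope])
  fix r
  obtain j :: nat where "r < real j"
    using reals_Archimedean2 by blast
  then have "{x. envelope x \<le> r} \<subseteq> K (Suc j)"
    using envelope_gt by fastforce
  then show "\<exists>C. compact C \<and> {x. envelope x \<le> r} \<subseteq> C"
    using assms by blast
qed

lemma envelope_in_lattice_cone:
  assumes "\<And>j. H j \<subseteq> F" "(\<lambda>_. 0) \<in> F"
  shows "(\<lambda>x. ereal (envelope x)) \<in> lattice_cone F"
  unfolding envelope_def
proof (rule lattice_cone_SUP)
  show "(\<Union>n. family n) \<subseteq> F"
    using assms unfolding family_def by blast
qed (use family_nonempty bdd_above_family_values in auto)

lemma envelope_locally_Max: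
  "compact L \<Longrightarrow> \<exists>fs. finite fs \<and> fs \<noteq> {} \<and> fs \<subseteq> (\<Union>n. family n) \<and>
     (\<forall>x\<in>L. envelope x = Max ((\<lambda>f. f x) ` fs))"
proof -
  assume "compact L"
  then obtain N where "L \<subseteq> K N"
    using compact_subset by blast
  then show ?thesis
    using envelope_eq_Max finite_family family_nonempty by (intro exI[of _ "family N"]) blast
qed

end

theorem mainTheorem13:
  fixes F :: "('a::topological_space \<Rightarrow> real) set"
    and K :: "nat \<Rightarrow> 'a set"
  assumes cont: "\<forall>f\<in>F. continuous_on UNIV f"
    and cone: "convex_cone_fun F"
    and constF: "\<forall>c::real. (\<lambda>x. c) \<in> F"
    and maxp: "max_principle F"
    and Kne: "\<forall>i. K i \<noteq> {}"
    and Kcpt: "\<forall>i. compact (K i)"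
    and Kconv: "\<forall>i. F_convex F (K i)"
    and Kint: "\<forall>i. K i \<subset> interior (K (Suc i))"
    and Kcover: "(\<Union>i. K i) = UNIV"
  shows "\<exists>p::'a \<Rightarrow> real. continuous_on UNIV p \<and> proper_map p \<and> (\<forall>x. p x \<ge> 0) \<and>
           (\<lambda>x. ereal (p x)) \<in> lattice_cone F \<and>
           (\<forall>L. compact L \<longrightarrow>
              (\<exists>fs. finite fs \<and> fs \<noteq> {} \<and> fs \<subseteq> F \<and>
                    (\<forall>x\<in>L. p x = Max ((\<lambda>f. f x) ` fs))))"
proof -
  interpret exhausting_sequence K
  proof
    show "K n \<subseteq> interior (K (Suc n))" for n
      using Kint by blast
  qed (fact Kcover)
  have "\<exists>H. finite H \<and> H \<subseteq> F \<and> (\<forall>h\<in>H. \<forall>x\<in>K j. h x < 0) \<and> (\<forall>y\<in>shell j. \<exists>h\<in>H. h y > real j)"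
    for j
    by (rule F_convex_finite_separating_family[OF _ cone _ _ _ compact_shell shell_disjoint])
       (use cont constF Kcpt Kconv in auto)
  then obtain H where H: "\<And>j. finite (H j)" "\<And>j. H j \<subseteq> F"
      "\<And>j h x. h \<in> H j \<Longrightarrow> x \<in> K j \<Longrightarrow> h x < 0"
      "\<And>j y. y \<in> shell j \<Longrightarrow> \<exists>h\<in>H j. h y > real j"
    by metis
  interpret separating_exhaustion K H
  proof
    show "continuous_on UNIV h" if "h \<in> H j" for h j
      using H(2) cont that by blast
  qed (fact H(1), fact H(3), fact H(4))
  have "(\<Union>n. family n) \<subseteq> F"
    using H(2) constF unfolding family_def by blast
  then have "\<exists>fs. finite fs \<and> fs \<noteq> {} \<and> fs \<subseteq> F \<and> (\<forall>x\<in>L. envelope x = Max ((\<lambda>f. f x) ` fs))"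
    if "compact L" for L
    using envelope_locally_Max[OF that] by (meson order_trans)
  moreover have "(\<lambda>x. ereal (envelope x)) \<in> lattice_cone F"
    using H(2) constF by (intro envelope_in_lattice_cone) auto
  ultimately show ?thesis
    using continuous_envelope proper_envelope Kcpt envelope_nonneg by blast
qed

end
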